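(* Let $\mathcal{C}$ be a layered circuit of depth $n^{\delta}$ over an alphabet $\Sigma$ whose symbols are $b\log n$ bits, which has an $n^{\varphi}$-parallel partition. Then there is an algorithm in the (non-faulty) Clique model that computes the function $f_{\mathcal{C}}$ in $O(n^{\delta+\varphi})$ rounds.
   Context: Clique model: $n$ nodes communicate in synchronous rounds; in each round every ordered pair of nodes may exchange a message of $b\log n$ bits, for a fixed constant $b$. $\Sigma$ is an alphabet of size $2^{b\log n}$. Layered circuit of depth $D$ over $\Sigma$: a connected directed graph with gate set $V=V_0\cup\dots\cup V_D$ and wires only from $V_i$ to $V_{i+1}$; each gate $v$ of fan-in $F$ is labeled by $f_v:\Sigma^F\to\Sigma$; gates of $V_0$ are input gates; $f_{\mathcal{C}}$ maps the inputs to the values of the gates of $V_D$. $n^{\varphi}$-parallel partition: a partition of each layer $V_i$ into $n$ parts $P_{i,w}$, $w\in\{0,\dots,n-1\}$ (part $P_{i,w}$ assigned to node $w$), such that for all $i,w$ the number of wires from $P_{i,w}$ to gates of $V_{i+1}\setminus P_{i+1,w}$ and the number of wires into $P_{i+1,w}$ from gates of $V_i\setminus P_{i,w}$ are both $O(n^{1+\varphi})$. An algorithm computes $f_{\mathcal{C}}$ when the circuit inputs are distributed among the nodes according to the parts of $V_0$ and each node $w$ ends holding the values of the gates in its part of the last layer. $\delta,\varphi$ are fixed and $O(\cdot)$ refers to $n\to\infty$. *)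

theory Defs
  imports Complex_Main
begin

definition alphabet :: "nat \<Rightarrow> real \<Rightarrow> nat set" where
  "alphabet n b = {..< 2 ^ nat \<lfloor>b * log 2 (real n)\<rfloor>}"

text \<open>Gates are naturals; layer i is V i;
  wires E only go from V i to V (i+1); the label f v of a non-input gate v is a function
  of the values of its in-neighbours (its fan-in gates), mapping symbols to symbols.\<close>
definition layered_circuit ::
  "nat set \<Rightarrow> nat \<Rightarrow> (nat \<Rightarrow> nat set) \<Rightarrow> (nat \<times> nat) set \<Rightarrow> (nat \<Rightarrow> (nat \<Rightarrow> nat) \<Rightarrow> nat) \<Rightarrow> bool"
where
  "layered_circuit S D V E f \<longleftrightarrow>
     (\<forall>i\<le>D. finite (V i)) \<and>
     (\<forall>i\<le>D. \<forall>j\<le>D. i \<noteq> j \<longrightarrow> V i \<inter> V j = {}) \<and>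
     E \<subseteq> (\<Union>i<D. V i \<times> V (Suc i)) \<and>
     \<comment> \<open>connected directed graph (weakly connected on the gate set)\<close>
     (\<forall>u\<in>(\<Union>i\<le>D. V i). \<forall>v\<in>(\<Union>i\<le>D. V i). (u, v) \<in> (E \<union> E\<inverse>)\<^sup>*) \<and>
     \<comment> \<open>gate labels: functions of the fan-in values only, with values in the alphabet\<close>
     (\<forall>i<D. \<forall>v\<in>V (Suc i).
        (\<forall>x y. (\<forall>u. (u, v) \<in> E \<longrightarrow> x u = y u) \<longrightarrow> f v x = f v y) \<and>
        (\<forall>x. (\<forall>u. (u, v) \<in> E \<longrightarrow> x u \<in> S) \<longrightarrow> f v x \<in> S))"

primrec circ_val :: "(nat \<Rightarrow> (nat \<Rightarrow> nat) \<Rightarrow> nat) \<Rightarrow> (nat \<Rightarrow> nat) \<Rightarrow> nat \<Rightarrow> nat \<Rightarrow> nat" where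
  "circ_val f x 0 = x"
| "circ_val f x (Suc i) = (\<lambda>v. f v (circ_val f x i))"

text \<open>\<open>n^\<phi>\<close>-parallel partition with explicit constant c: owner v is the node w < n whose part
  P_{i,w} = {v \<in> V i. owner v = w} contains v; the numbers of wires leaving P_{i,w}
  to other parts of V (i+1), and entering P_{i+1,w} from other parts of V i, are at most
  c * n^(1+\<phi>).\<close>
definition parallel_partition ::
  "nat \<Rightarrow> real \<Rightarrow> real \<Rightarrow> nat \<Rightarrow> (nat \<Rightarrow> nat set) \<Rightarrow> (nat \<times> nat) set \<Rightarrow> (nat \<Rightarrow> nat) \<Rightarrow> bool"
where
  "parallel_partition n c \<phi> D V E owner \<longleftrightarrow>
     (\<forall>i\<le>D. \<forall>v\<in>V i. owner v < n) \<and>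
     (\<forall>i<D. \<forall>w<n.
        real (card {(u, v) \<in> E. u \<in> V i \<and> owner u = w \<and> v \<in> V (Suc i) \<and> owner v \<noteq> w})
          \<le> c * real n powr (1 + \<phi>) \<and>
        real (card {(u, v) \<in> E. v \<in> V (Suc i) \<and> owner v = w \<and> u \<in> V i \<and> owner u \<noteq> w})
          \<le> c * real n powr (1 + \<phi>))"

text \<open>Execution of a deterministic synchronous Clique algorithm on n nodes.
  init w inp: initial state of node w from its local input;
  msg r u w s: message sent in round r by node u (in state s) to node w;
  step r w s m: new state of node w from its old state and the received messages m u.\<close>
fun clique_run ::
  "nat \<Rightarrow> (nat \<Rightarrow> (nat \<Rightarrow> nat) \<Rightarrow> 's) \<Rightarrow> (nat \<Rightarrow> nat \<Rightarrow> nat \<Rightarrow> 's \<Rightarrow> nat)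
   \<Rightarrow> (nat \<Rightarrow> nat \<Rightarrow> 's \<Rightarrow> (nat \<Rightarrow> nat) \<Rightarrow> 's) \<Rightarrow> (nat \<Rightarrow> (nat \<Rightarrow> nat)) \<Rightarrow> nat \<Rightarrow> nat \<Rightarrow> 's"
where
  "clique_run n init msg step inp 0 w = init w (inp w)"
| "clique_run n init msg step inp (Suc r) w =
     step r w (clique_run n init msg step inp r w)
       (\<lambda>u. if u < n then msg r u w (clique_run n init msg step inp r u) else 0)"

text \<open>The algorithm computes f_C in R rounds: every message is a single alphabet symbol
  (b log n bits); inputs are distributed according to the parts of V 0; after R rounds each
  node w outputs (via out) the values of the gates in its part of V D.\<close>
definition clique_computes ::
  "nat \<Rightarrow> nat set \<Rightarrow> nat \<Rightarrow> (nat \<Rightarrow> nat set) \<Rightarrow> (nat \<Rightarrow> (nat \<Rightarrow> nat) \<Rightarrow> nat) \<Rightarrow> (nat \<Rightarrow> nat)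
   \<Rightarrow> (nat \<Rightarrow> (nat \<Rightarrow> nat) \<Rightarrow> 's) \<Rightarrow> (nat \<Rightarrow> nat \<Rightarrow> nat \<Rightarrow> 's \<Rightarrow> nat)
   \<Rightarrow> (nat \<Rightarrow> nat \<Rightarrow> 's \<Rightarrow> (nat \<Rightarrow> nat) \<Rightarrow> 's) \<Rightarrow> (nat \<Rightarrow> 's \<Rightarrow> nat \<Rightarrow> nat) \<Rightarrow> nat \<Rightarrow> bool"
where
  "clique_computes n S D V f owner init msg step out R \<longleftrightarrow>
     (\<forall>r u w s. msg r u w s \<in> S) \<and>
     (\<forall>x. (\<forall>g\<in>V 0. x g \<in> S) \<longrightarrow>
        (\<forall>w<n. \<forall>v\<in>V D. owner v = w \<longrightarrow>
           out w (clique_run n init msg step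
                    (\<lambda>w' g. if g \<in> V 0 \<and> owner g = w' then x g else 0) R w) v
           = circ_val f x D v))"

end

theory Submission
  imports Defs
begin

text \<open>Each layer is simulated in one phase of \<open>O(n\<^sup>\<phi>)\<close> rounds. A wire between gates owned by
  different nodes is routed in two hops through a relay node: the cross wires of a layer are
  coloured with pairs (relay, slot) in \<open>[n] \<times> [L]\<close> so that wires with a common source owner or a
  common target owner get different colours. Then in slot \<open>s\<close> of the first half of the phase every
  node sends at most one value to each relay, and in slot \<open>s\<close> of the second half every relay
  forwards at most one value to each target owner. A wire conflicts with at most \<open>2\<Delta>\<close> others,
  \<open>\<Delta> = c n\<^bsup>1+\<phi>\<^esup>\<close>, so a greedy colouring with \<open>L = O(n\<^sup>\<phi>)\<close> slots exists.\<close>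

lemma greedy_coloring:
  fixes R :: "'a \<Rightarrow> 'a \<Rightarrow> bool"
  assumes "finite X" and "symp R"
    and deg: "\<And>e. e \<in> X \<Longrightarrow> card {e' \<in> X. e' \<noteq> e \<and> R e e'} \<le> d"
    and "finite C" and "d < card C"
  shows "\<exists>col. col ` X \<subseteq> C \<and> (\<forall>e\<in>X. \<forall>e'\<in>X. e \<noteq> e' \<and> R e e' \<longrightarrow> col e \<noteq> col e')"
  using \<open>finite X\<close> deg
proof (induction X rule: finite_induct)
  case empty
  then show ?case by simp
next
  case (insert x F)
  have "card {e' \<in> F. e' \<noteq> e \<and> R e e'} \<le> d" if "e \<in> F" for e
  proof -
    have "card {e' \<in> F. e' \<noteq> e \<and> R e e'} \<le> card {e' \<in> insert x F. e' \<noteq> e \<and> R e e'}"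
      using insert.hyps(1) by (intro card_mono) auto
    also have "\<dots> \<le> d"
      using insert.prems that by blast
    finally show ?thesis .
  qed
  then obtain col where col_F: "col ` F \<subseteq> C"
    and proper_F: "\<forall>e\<in>F. \<forall>e'\<in>F. e \<noteq> e' \<and> R e e' \<longrightarrow> col e \<noteq> col e'"
    using insert.IH by blast
  let ?used = "col ` {e' \<in> F. R x e'}"
  have "{e' \<in> F. R x e'} = {e' \<in> insert x F. e' \<noteq> x \<and> R x e'}"
    using insert.hyps(2) by auto
  then have "card ?used \<le> d"
    using insert.prems[of x] card_image_le[of "{e' \<in> F. R x e'}" col] insert.hyps(1) by simp
  then have "\<not> C \<subseteq> ?used"
    using card_mono[of ?used C] insert.hyps(1) \<open>d < card C\<close> by auto
  then obtain c where "c \<in> C" and fresh: "\<And>e'. e' \<in> F \<Longrightarrow> R x e' \<Longrightarrow> c \<noteq> col e'"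
    by blast
  have "(col(x := c)) e \<noteq> (col(x := c)) e'"
    if mem: "e \<in> insert x F" "e' \<in> insert x F" and "e \<noteq> e'" "R e e'" for e e'
  proof -
    consider "e = x" | "e' = x" | "e \<in> F" "e' \<in> F"
      using mem by blast
    then show ?thesis
    proof cases
      case 1
      then show ?thesis using that fresh insert.hyps(2) by auto
    next
      case 2
      then have "R x e" using that \<open>symp R\<close> by (blast dest: sympD)
      then show ?thesis using 2 that fresh insert.hyps(2) by fastforce
    next
      case 3
      then show ?thesis using that proper_F insert.hyps(2) by auto
    qed
  qed
  moreover have "(col(x := c)) ` insert x F \<subseteq> C"
    using col_F \<open>c \<in> C\<close> insert.hyps(2) by auto
  ultimately show ?case by blast
qed

definition cross_wires :: "(nat \<Rightarrow> nat set) \<Rightarrow> (nat \<times> nat) set \<Rightarrow> (nat \<Rightarrow> nat) \<Rightarrow> nat \<Rightarrow> (nat \<times> nat) set"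
  where "cross_wires V E owner i = {(u, v) \<in> E. u \<in> V i \<and> v \<in> V (Suc i) \<and> owner u \<noteq> owner v}"

definition wires_conflict :: "(nat \<Rightarrow> nat) \<Rightarrow> nat \<times> nat \<Rightarrow> nat \<times> nat \<Rightarrow> bool"
  where "wires_conflict owner e e' \<longleftrightarrow> owner (fst e) = owner (fst e') \<or> owner (snd e) = owner (snd e')"

lemma cross_wires_coloring:
  assumes "finite (V i)" and "finite (V (Suc i))"
    and owner_less: "\<And>v. v \<in> V i \<union> V (Suc i) \<Longrightarrow> owner v < n"
    and out_wires: "\<And>w. w < n \<Longrightarrow>
      card {(u, v) \<in> E. u \<in> V i \<and> owner u = w \<and> v \<in> V (Suc i) \<and> owner v \<noteq> w} \<le> \<Delta>"
    and in_wires: "\<And>w. w < n \<Longrightarrow>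
      card {(u, v) \<in> E. v \<in> V (Suc i) \<and> owner v = w \<and> u \<in> V i \<and> owner u \<noteq> w} \<le> \<Delta>"
    and "2 * \<Delta> < n * L"
  shows "\<exists>col. col ` cross_wires V E owner i \<subseteq> {..<n} \<times> {..<L} \<and>
    (\<forall>e\<in>cross_wires V E owner i. \<forall>e'\<in>cross_wires V E owner i.
       e \<noteq> e' \<and> wires_conflict owner e e' \<longrightarrow> col e \<noteq> col e')"
proof (rule greedy_coloring)
  let ?X = "cross_wires V E owner i"
  have "?X \<subseteq> V i \<times> V (Suc i)"
    unfolding cross_wires_def by auto
  then show "finite ?X"
    using assms(1,2) finite_subset by blast
  show "symp (wires_conflict owner)"
    unfolding symp_def wires_conflict_def by auto
  show "finite ({..<n} \<times> {..<L})" by simp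
  show "2 * \<Delta> < card ({..<n} \<times> {..<L})"
    using \<open>2 * \<Delta> < n * L\<close> by simp
  fix e assume "e \<in> ?X"
  then obtain u v where e: "e = (u, v)" "u \<in> V i" "v \<in> V (Suc i)"
    unfolding cross_wires_def by auto
  let ?same_source = "{(u', v') \<in> E. u' \<in> V i \<and> owner u' = owner u \<and> v' \<in> V (Suc i) \<and> owner v' \<noteq> owner u}"
  let ?same_target = "{(u', v') \<in> E. v' \<in> V (Suc i) \<and> owner v' = owner v \<and> u' \<in> V i \<and> owner u' \<noteq> owner v}"
  have "{e' \<in> ?X. e' \<noteq> e \<and> wires_conflict owner e e'} \<subseteq> ?same_source \<union> ?same_target"
    unfolding cross_wires_def wires_conflict_def e by auto
  moreover have "?same_source \<union> ?same_target \<subseteq> V i \<times> V (Suc i)"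
    by auto
  ultimately have "card {e' \<in> ?X. e' \<noteq> e \<and> wires_conflict owner e e'} \<le> card (?same_source \<union> ?same_target)"
    using assms(1,2) by (intro card_mono) (auto intro: finite_subset)
  also have "\<dots> \<le> card ?same_source + card ?same_target"
    by (rule card_Un_le)
  also have "\<dots> \<le> 2 * \<Delta>"
    using out_wires[of "owner u"] in_wires[of "owner v"] owner_less e by simp
  finally show "card {e' \<in> ?X. e' \<noteq> e \<and> wires_conflict owner e e'} \<le> 2 * \<Delta>" .
qed

definition lookup :: "nat list \<Rightarrow> nat \<Rightarrow> nat" where
  "lookup s g = (if g < length s then s ! g else 0)"

lemma lookup_map_upt: "g < M \<Longrightarrow> lookup (map h [0..<M]) g = h g"
  by (simp add: lookup_def)

text \<open>A node's state is a list of gate values indexed by gate number.\<close>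

locale routing_schedule =
  fixes n :: nat and S :: "nat set" and D :: nat and V :: "nat \<Rightarrow> nat set"
    and E :: "(nat \<times> nat) set" and f :: "nat \<Rightarrow> (nat \<Rightarrow> nat) \<Rightarrow> nat"
    and owner :: "nat \<Rightarrow> nat" and L :: nat and col :: "nat \<Rightarrow> nat \<times> nat \<Rightarrow> nat \<times> nat"
  assumes circuit: "layered_circuit S D V E f"
    and owner_less: "\<And>i v. i \<le> D \<Longrightarrow> v \<in> V i \<Longrightarrow> owner v < n"
    and zero_in_alphabet: "0 \<in> S"
    and col_range: "\<And>i. i < D \<Longrightarrow> col i ` cross_wires V E owner i \<subseteq> {..<n} \<times> {..<L}"
    and col_proper: "\<And>i e e'. i < D \<Longrightarrow> e \<in> cross_wires V E owner i \<Longrightarrow> e' \<in> cross_wires V E owner i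
      \<Longrightarrow> e \<noteq> e' \<Longrightarrow> wires_conflict owner e e' \<Longrightarrow> col i e \<noteq> col i e'"
begin

lemma layers_finite: "i \<le> D \<Longrightarrow> finite (V i)"
  using circuit unfolding layered_circuit_def by (elim conjE) blast

lemma layer_unique: "i \<le> D \<Longrightarrow> j \<le> D \<Longrightarrow> g \<in> V i \<Longrightarrow> g \<in> V j \<Longrightarrow> i = j"
  using circuit unfolding layered_circuit_def by (elim conjE) blast

lemma wire_source_layer:
  assumes "i < D" "v \<in> V (Suc i)" "(u, v) \<in> E"
  shows "u \<in> V i"
proof -
  have "E \<subseteq> (\<Union>i<D. V i \<times> V (Suc i))"
    using circuit unfolding layered_circuit_def by (elim conjE)
  then obtain j where "j < D" "u \<in> V j" "v \<in> V (Suc j)"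
    using assms(3) by blast
  with assms layer_unique[of "Suc i" "Suc j" v] show ?thesis by simp
qed

lemma gate_label:
  assumes "i < D" "v \<in> V (Suc i)"
  shows "(\<And>u. (u, v) \<in> E \<Longrightarrow> x u = y u) \<Longrightarrow> f v x = f v y"
    and "(\<And>u. (u, v) \<in> E \<Longrightarrow> x u \<in> S) \<Longrightarrow> f v x \<in> S"
proof -
  have "\<forall>i<D. \<forall>v\<in>V (Suc i).
      (\<forall>x y. (\<forall>u. (u, v) \<in> E \<longrightarrow> x u = y u) \<longrightarrow> f v x = f v y) \<and>
      (\<forall>x. (\<forall>u. (u, v) \<in> E \<longrightarrow> x u \<in> S) \<longrightarrow> f v x \<in> S)"
    using circuit unfolding layered_circuit_def by (elim conjE)
  with assms show "(\<And>u. (u, v) \<in> E \<Longrightarrow> x u = y u) \<Longrightarrow> f v x = f v y"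
    and "(\<And>u. (u, v) \<in> E \<Longrightarrow> x u \<in> S) \<Longrightarrow> f v x \<in> S"
    by blast+
qed

lemma circ_val_in_alphabet:
  assumes "\<And>g. g \<in> V 0 \<Longrightarrow> x g \<in> S"
  shows "i \<le> D \<Longrightarrow> g \<in> V i \<Longrightarrow> circ_val f x i g \<in> S"
proof (induction i arbitrary: g)
  case 0
  then show ?case using assms by simp
next
  case (Suc i)
  then show ?case
    using gate_label(2)[of i g] wire_source_layer[of i g] by simp
qed

definition M :: nat where
  "M = Suc (Max (\<Union>i\<le>D. V i))"

lemma gate_less_M:
  assumes "i \<le> D" "g \<in> V i"
  shows "g < M"
proof -
  have "g \<le> Max (\<Union>i\<le>D. V i)"
    using assms layers_finite by (intro Max_ge) auto
  then show ?thesis unfolding M_def by simp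
qed

text \<open>Layer \<open>i\<close> is handled in the rounds \<open>i T \<dots> i T + 2 L\<close>: in slot \<open>s < L\<close> the owner of the source of a
  cross wire coloured \<open>(k, s)\<close> sends the source value to the relay \<open>k\<close>, in slot \<open>L + s\<close> the relay
  forwards it to the owner of the target, and the last round evaluates the gates of layer \<open>i + 1\<close>.\<close>

definition T :: nat where
  "T = 2 * L + 1"

definition relays :: "nat \<Rightarrow> nat \<Rightarrow> nat \<Rightarrow> nat \<times> nat \<Rightarrow> bool" where
  "relays r a w e \<longleftrightarrow> r div T < D \<and> e \<in> cross_wires V E owner (r div T) \<and>
     (r mod T < L \<and> owner (fst e) = a \<and> col (r div T) e = (w, r mod T) \<or>
      L \<le> r mod T \<and> owner (snd e) = w \<and> col (r div T) e = (a, r mod T - L))"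

lemma relays_unique:
  assumes "relays r a w e" "relays r a w e'"
  shows "e = e'"
proof (rule ccontr)
  assume "e \<noteq> e'"
  moreover have "wires_conflict owner e e'" and "col (r div T) e = col (r div T) e'"
    using assms unfolding relays_def wires_conflict_def by auto
  ultimately show False
    using assms col_proper unfolding relays_def by blast
qed

definition sched :: "nat \<Rightarrow> nat \<Rightarrow> nat \<Rightarrow> nat option" where
  "sched r a w = (if \<exists>e. relays r a w e then Some (fst (THE e. relays r a w e)) else None)"

lemma sched_relays:
  assumes "relays r a w e"
  shows "sched r a w = Some (fst e)"
proof -
  have "(THE e. relays r a w e) = e"
    using assms relays_unique by blast
  with assms show ?thesis
    unfolding sched_def by (metis (mono_tags, lifting))
qed

lemma phase_slot:
  assumes "s < T"
  shows "(i * T + s) div T = i" and "(i * T + s) mod T = s"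
  using assms by simp_all

lemma relays_phase:
  assumes "i < D" "e \<in> cross_wires V E owner i" "col i e = (k, s)"
  shows "relays (i * T + s) (owner (fst e)) k e" and "relays (i * T + (L + s)) k (owner (snd e)) e"
proof -
  have "s < L"
    using col_range[OF assms(1)] assms(2,3) by force
  then have "s < T" and "L + s < T"
    unfolding T_def by simp_all
  then show "relays (i * T + s) (owner (fst e)) k e" and "relays (i * T + (L + s)) k (owner (snd e)) e"
    using assms \<open>s < L\<close> unfolding relays_def phase_slot[OF \<open>s < T\<close>] phase_slot[OF \<open>L + s < T\<close>]
    by simp_all
qed

text \<open>\<open>known r w\<close> depends on the circuit and the schedule only, not on the input, so the nodes
  may consult it; entries of gates outside \<open>known r w\<close> are junk.\<close>

primrec known :: "nat \<Rightarrow> nat \<Rightarrow> nat set" where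
  "known 0 w = {g \<in> V 0. owner g = w}"
| "known (Suc r) w = known r w \<union> {g. \<exists>a<n. sched r a w = Some g \<and> g \<in> known r a}
     \<union> {g. \<exists>i<D. g \<in> V (Suc i) \<and> owner g = w \<and> (\<forall>u. (u, g) \<in> E \<longrightarrow> u \<in> known r w)}"

definition sender :: "nat \<Rightarrow> nat \<Rightarrow> nat \<Rightarrow> nat" where
  "sender r w g = (SOME a. a < n \<and> sched r a w = Some g \<and> g \<in> known r a)"

definition init :: "nat \<Rightarrow> (nat \<Rightarrow> nat) \<Rightarrow> nat list" where
  "init w inp = map (\<lambda>g. if g \<in> V 0 \<and> owner g = w then inp g else 0) [0..<M]"

definition msg :: "nat \<Rightarrow> nat \<Rightarrow> nat \<Rightarrow> nat list \<Rightarrow> nat" where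
  "msg r a w s = (case sched r a w of
     Some g \<Rightarrow> if lookup s g \<in> S then lookup s g else 0
   | None \<Rightarrow> 0)"

definition step :: "nat \<Rightarrow> nat \<Rightarrow> nat list \<Rightarrow> (nat \<Rightarrow> nat) \<Rightarrow> nat list" where
  "step r w s m = map (\<lambda>g.
     if g \<in> known r w then lookup s g
     else if \<exists>a<n. sched r a w = Some g \<and> g \<in> known r a then m (sender r w g)
     else f g (lookup s)) [0..<M]"

definition out :: "nat \<Rightarrow> nat list \<Rightarrow> nat \<Rightarrow> nat" where
  "out w s = lookup s"

definition run :: "(nat \<Rightarrow> nat) \<Rightarrow> nat \<Rightarrow> nat \<Rightarrow> nat list" where
  "run x = clique_run n init msg step (\<lambda>w g. if g \<in> V 0 \<and> owner g = w then x g else 0)"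

lemma known_mono: "g \<in> known r w \<Longrightarrow> r \<le> r' \<Longrightarrow> g \<in> known r' w"
  using lift_Suc_mono_le[of "\<lambda>r. known r w" r r'] by auto

lemma run_0: "run x 0 w = init w (\<lambda>g. if g \<in> V 0 \<and> owner g = w then x g else 0)"
  unfolding run_def by simp

lemma run_Suc: "run x (Suc r) w = step r w (run x r w) (\<lambda>u. if u < n then msg r u w (run x r u) else 0)"
  unfolding run_def by simp

lemma run_correct:
  assumes input: "\<And>g. g \<in> V 0 \<Longrightarrow> x g \<in> S"
  shows "i \<le> D \<Longrightarrow> g \<in> V i \<Longrightarrow> g \<in> known r w \<Longrightarrow> lookup (run x r w) g = circ_val f x i g"
proof (induction r arbitrary: w i g)
  case 0
  then have "i = 0"
    using layer_unique[of i 0 g] by auto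
  with 0 show ?case
    using gate_less_M[of 0 g] by (simp add: run_0 init_def lookup_map_upt)
next
  case (Suc r)
  let ?received = "\<exists>a<n. sched r a w = Some g \<and> g \<in> known r a"
  have lookup_Suc: "lookup (run x (Suc r) w) g =
     (if g \<in> known r w then lookup (run x r w) g
      else if ?received then (if sender r w g < n then msg r (sender r w g) w (run x r (sender r w g)) else 0)
      else f g (lookup (run x r w)))"
    using gate_less_M[OF Suc.prems(1,2)] by (simp add: run_Suc step_def lookup_map_upt)
  consider (kept) "g \<in> known r w" | (received) "g \<notin> known r w" ?received
    | (computed) "g \<notin> known r w" "\<not> ?received"
    by blast
  then show ?case
  proof cases
    case kept
    then show ?thesis using lookup_Suc Suc by simp
  next
    case received
    define a where "a = sender r w g"
    have a: "a < n \<and> sched r a w = Some g \<and> g \<in> known r a"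
      using received(2) unfolding a_def sender_def by (rule someI_ex)
    have "lookup (run x r a) g = circ_val f x i g"
      using Suc.IH a Suc.prems(1,2) by blast
    moreover have "circ_val f x i g \<in> S"
      using circ_val_in_alphabet[of x i g] input Suc.prems(1,2) by blast
    ultimately show ?thesis
      using lookup_Suc received a by (simp add: msg_def a_def)
  next
    case computed
    then obtain j where j: "j < D" "g \<in> V (Suc j)" "\<forall>u. (u, g) \<in> E \<longrightarrow> u \<in> known r w"
      using Suc.prems(3) by auto
    then have "i = Suc j"
      using layer_unique[of i "Suc j" g] Suc.prems(1,2) by simp
    have "f g (lookup (run x r w)) = f g (circ_val f x j)"
      by (rule gate_label(1)[OF j(1,2)]) (use Suc.IH wire_source_layer j in \<open>auto intro: less_imp_le\<close>)
    then show ?thesis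
      using lookup_Suc computed \<open>i = Suc j\<close> by simp
  qed
qed

lemma cross_wire_delivered:
  assumes "i < D" and wire: "(u, v) \<in> cross_wires V E owner i"
    and source_known: "u \<in> known (i * T) (owner u)"
  shows "u \<in> known (i * T + 2 * L) (owner v)"
proof -
  obtain k s where col: "col i (u, v) = (k, s)"
    by fastforce
  have "k < n" "s < L"
    using col_range[OF \<open>i < D\<close>] wire col by force+
  have "owner u < n"
    using owner_less[of i u] wire \<open>i < D\<close> unfolding cross_wires_def by auto
  have "u \<in> known (i * T + s) (owner u)"
    using source_known by (rule known_mono) simp
  then have "u \<in> known (Suc (i * T + s)) k"
    using sched_relays[OF relays_phase(1)[OF \<open>i < D\<close> wire col]] \<open>owner u < n\<close> by auto
  then have "u \<in> known (i * T + (L + s)) k"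
    by (rule known_mono) (use \<open>s < L\<close> in simp)
  then have "u \<in> known (Suc (i * T + (L + s))) (owner v)"
    using sched_relays[OF relays_phase(2)[OF \<open>i < D\<close> wire col]] \<open>k < n\<close> by auto
  then show ?thesis
    by (rule known_mono) (use \<open>s < L\<close> in simp)
qed

lemma layer_known: "i \<le> D \<Longrightarrow> g \<in> V i \<Longrightarrow> g \<in> known (i * T) (owner g)"
proof (induction i arbitrary: g)
  case 0
  then show ?case by simp
next
  case (Suc i)
  then have "i < D" by simp
  have "u \<in> known (i * T + 2 * L) (owner g)" if "(u, g) \<in> E" for u
  proof -
    have "u \<in> V i"
      using wire_source_layer \<open>i < D\<close> Suc.prems(2) that by blast
    then have "u \<in> known (i * T) (owner u)"
      using Suc.IH \<open>i < D\<close> by simp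
    show ?thesis
    proof (cases "owner u = owner g")
      case True
      then show ?thesis
        using \<open>u \<in> known (i * T) (owner u)\<close> known_mono[of u "i * T" _ "i * T + 2 * L"] by simp
    next
      case False
      then have "(u, g) \<in> cross_wires V E owner i"
        using that \<open>u \<in> V i\<close> Suc.prems(2) unfolding cross_wires_def by simp
      then show ?thesis
        using cross_wire_delivered \<open>i < D\<close> \<open>u \<in> known (i * T) (owner u)\<close> by simp
    qed
  qed
  then have "g \<in> known (Suc (i * T + 2 * L)) (owner g)"
    using Suc.prems(2) \<open>i < D\<close> by auto
  moreover have "Suc (i * T + 2 * L) = Suc i * T"
    by (simp add: T_def)
  ultimately show ?case by simp
qed

lemma clique_computes: "clique_computes n S D V f owner init msg step out (D * T)"
  unfolding clique_computes_def
proof (intro conjI allI impI ballI)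
  show "msg r a w s \<in> S" for r a w s
    unfolding msg_def using zero_in_alphabet by (auto split: option.split)
  fix x w v
  assume "\<forall>g\<in>V 0. x g \<in> S" "v \<in> V D" "owner v = w"
  then show "out w (clique_run n init msg step (\<lambda>w g. if g \<in> V 0 \<and> owner g = w then x g else 0) (D * T) w) v
      = circ_val f x D v"
    using run_correct[of x D v "D * T" w] layer_known[of D v] unfolding out_def run_def by simp
qed

end

lemma parallel_partition_coloring:
  assumes circuit: "layered_circuit S D V E f" and partition: "parallel_partition n c \<phi> D V E owner"
    and slots: "2 * nat \<lfloor>c * real n powr (1 + \<phi>)\<rfloor> < n * L"
  shows "\<exists>col. \<forall>i<D. col i ` cross_wires V E owner i \<subseteq> {..<n} \<times> {..<L} \<and>
    (\<forall>e\<in>cross_wires V E owner i. \<forall>e'\<in>cross_wires V E owner i.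
       e \<noteq> e' \<and> wires_conflict owner e e' \<longrightarrow> col i e \<noteq> col i e')"
proof -
  have finite: "\<forall>i\<le>D. finite (V i)"
    using circuit unfolding layered_circuit_def by (elim conjE)
  have "\<exists>col. col ` cross_wires V E owner i \<subseteq> {..<n} \<times> {..<L} \<and>
    (\<forall>e\<in>cross_wires V E owner i. \<forall>e'\<in>cross_wires V E owner i.
       e \<noteq> e' \<and> wires_conflict owner e e' \<longrightarrow> col e \<noteq> col e')" if "i < D" for i
  proof (rule cross_wires_coloring[OF _ _ _ _ _ slots])
    show "finite (V i)" "finite (V (Suc i))"
      using finite \<open>i < D\<close> by simp_all
    show "owner v < n" if "v \<in> V i \<union> V (Suc i)" for v
      using partition \<open>i < D\<close> that unfolding parallel_partition_def
      by (metis Suc_leI Un_iff less_imp_le_nat)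
    fix w assume "w < n"
    then show "card {(u, v) \<in> E. u \<in> V i \<and> owner u = w \<and> v \<in> V (Suc i) \<and> owner v \<noteq> w}
        \<le> nat \<lfloor>c * real n powr (1 + \<phi>)\<rfloor>"
      and "card {(u, v) \<in> E. v \<in> V (Suc i) \<and> owner v = w \<and> u \<in> V i \<and> owner u \<noteq> w}
        \<le> nat \<lfloor>c * real n powr (1 + \<phi>)\<rfloor>"
      using partition \<open>i < D\<close> unfolding parallel_partition_def by (blast intro: le_nat_floor)+
  qed
  then have "\<forall>i. \<exists>col. i < D \<longrightarrow> col ` cross_wires V E owner i \<subseteq> {..<n} \<times> {..<L} \<and>
    (\<forall>e\<in>cross_wires V E owner i. \<forall>e'\<in>cross_wires V E owner i.
       e \<noteq> e' \<and> wires_conflict owner e e' \<longrightarrow> col e \<noteq> col e')"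
    by blast
  then show ?thesis
    by (metis choice)
qed

lemma round_count_bound:
  fixes n D \<Delta> :: nat and c \<delta> \<phi> :: real
  assumes "n \<ge> 1" and "\<phi> \<ge> 0"
    and \<Delta>: "real \<Delta> \<le> c * real n powr (1 + \<phi>)" and D: "real D \<le> real n powr \<delta>"
  shows "real (D * (2 * (2 * \<Delta> div n + 1) + 1)) \<le> (4 * c + 3) * real n powr (\<delta> + \<phi>)"
proof -
  have n: "real n > 0" and "real n powr \<phi> \<ge> 1"
    using assms(1,2) by (simp_all add: ge_one_powr_ge_zero)
  have "real (2 * \<Delta> div n) \<le> real (2 * \<Delta>) / real n"
    by (rule of_nat_div_le_of_nat)
  also have "\<dots> \<le> 2 * c * real n powr \<phi>"
    using \<Delta> n by (simp add: powr_add field_simps)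
  finally have "real (2 * (2 * \<Delta> div n + 1) + 1) \<le> (4 * c + 3) * real n powr \<phi>"
    using \<open>real n powr \<phi> \<ge> 1\<close> by (simp add: algebra_simps)
  then have "real D * real (2 * (2 * \<Delta> div n + 1) + 1) \<le> real n powr \<delta> * ((4 * c + 3) * real n powr \<phi>)"
    using D by (intro mult_mono) auto
  also have "\<dots> = (4 * c + 3) * real n powr (\<delta> + \<phi>)"
    by (simp add: powr_add)
  finally show ?thesis
    by (simp only: of_nat_mult)
qed

theorem lemma3:
  fixes b \<delta> \<phi> c :: real
  assumes "b > 0" and "\<delta> \<ge> 0" and "\<phi> \<ge> 0" and "c > 0"
  shows "\<exists>C N. \<forall>n \<ge> N. \<forall>D V E f owner.
           layered_circuit (alphabet n b) D V E f \<and> real D \<le> real n powr \<delta> \<and>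
           parallel_partition n c \<phi> D V E owner \<longrightarrow>
           (\<exists>(init :: nat \<Rightarrow> (nat \<Rightarrow> nat) \<Rightarrow> nat list) msg step out R.
              real R \<le> C * real n powr (\<delta> + \<phi>) \<and>
              clique_computes n (alphabet n b) D V f owner init msg step out R)"
proof (intro exI[of _ "4 * c + 3"] exI[of _ 1] allI impI)
  fix n D V E f owner
  assume "1 \<le> n" and "layered_circuit (alphabet n b) D V E f \<and> real D \<le> real n powr \<delta> \<and>
    parallel_partition n c \<phi> D V E owner"
  then have circuit: "layered_circuit (alphabet n b) D V E f" and depth: "real D \<le> real n powr \<delta>"
    and partition: "parallel_partition n c \<phi> D V E owner"
    by auto
  define \<Delta> where "\<Delta> = nat \<lfloor>c * real n powr (1 + \<phi>)\<rfloor>"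
  define L where "L = 2 * \<Delta> div n + 1"
  have "2 * \<Delta> < n * L"
    unfolding L_def using dividend_less_times_div[of n "2 * \<Delta>"] \<open>1 \<le> n\<close> by simp
  then obtain col where col: "\<forall>i<D. col i ` cross_wires V E owner i \<subseteq> {..<n} \<times> {..<L} \<and>
    (\<forall>e\<in>cross_wires V E owner i. \<forall>e'\<in>cross_wires V E owner i.
       e \<noteq> e' \<and> wires_conflict owner e e' \<longrightarrow> col i e \<noteq> col i e')"
    using parallel_partition_coloring[OF circuit partition] unfolding \<Delta>_def by blast
  interpret routing_schedule n "alphabet n b" D V E f owner L col
    using circuit partition col by unfold_locales (auto simp: parallel_partition_def alphabet_def)
  have "real \<Delta> \<le> c * real n powr (1 + \<phi>)"
    unfolding \<Delta>_def using \<open>c > 0\<close> by (intro of_nat_floor) simp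
  then have "real (D * (2 * L + 1)) \<le> (4 * c + 3) * real n powr (\<delta> + \<phi>)"
    unfolding L_def using round_count_bound \<open>1 \<le> n\<close> \<open>\<phi> \<ge> 0\<close> depth by blast
  with clique_computes show "\<exists>(init :: nat \<Rightarrow> (nat \<Rightarrow> nat) \<Rightarrow> nat list) msg step out R.
      real R \<le> (4 * c + 3) * real n powr (\<delta> + \<phi>) \<and>
      clique_computes n (alphabet n b) D V f owner init msg step out R"
    unfolding T_def by blast
qed

end
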